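(* Let $m\in\mathbb{N}$. Then there is a set $\Gamma(m)\subset(0,1]^{m}$ with the following properties: (i) $\sharp\Gamma(m)\leq 2^{5m/2}$. (ii) For every $\{\varepsilon_{i}\}_{i=1}^{m}\in\Gamma(m)$, the numbers $m\varepsilon_{i}$ are positive integers for all $i\in\{1,\dots,m\}$, $\sum_{i=1}^{m}\varepsilon_{i}\leq 3$, and for all $t>0$, $\sharp\{i\in\{1,\dots,m\}:\varepsilon_{i}\geq t\}\leq 2/t$. (iii) For every sequence $\{\alpha_{i}\}_{i=1}^{m}$ with each $\alpha_{i}\in[0,1]$ and $\sum_{i=1}^{m}\alpha_{i}=1$ there is $\{\varepsilon_{i}\}_{i=1}^{m}\in\Gamma(m)$ such that $\alpha_{i}\leq\varepsilon_{i}$ for all $i\in\{1,\dots,m\}$.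
   Context: $\sharp A$ denotes the cardinality of a finite set $A$. *)

theory Defs
  imports "HOL-Analysis.Analysis"
begin

end

theory Submission
  imports Defs
begin

text \<open>
  Take for \<Gamma>(m) all vectors with entries in {1/m, 2/m, ..., 1} whose sum is at most 2.
  Rounding each alpha_i up to the grid (and at least to 1/m) costs at most 1/m per entry,
  so the sum grows from 1 to at most 2; the bound on the number of large entries is
  Markov's inequality. For the count, the scaled partial sums of such a vector form a
  strictly increasing sequence of m integers in {1..2m}, so the vector is determined by a
  subset of {1..2m}, and there are at most 2^(2m) \<le> 2^(5m/2) of them.
\<close>

lemma card_superlevel_le:
  fixes f :: "'a \<Rightarrow> real"
  assumes "finite A" "\<And>x. x \<in> A \<Longrightarrow> 0 \<le> f x" "sum f A \<le> c" "t > 0"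
  shows "real (card {x\<in>A. t \<le> f x}) \<le> c / t"
proof -
  let ?B = "{x\<in>A. t \<le> f x}"
  have "real (card ?B) * t = (\<Sum>x\<in>?B. t)" by simp
  also have "\<dots> \<le> sum f ?B" by (rule sum_mono) simp
  also have "\<dots> \<le> sum f A" by (rule sum_mono2) (use assms in auto)
  finally show ?thesis using assms(3,4) by (simp add: field_simps)
qed

lemma strict_mono_on_eq_if_image_eq:
  fixes f g :: "nat \<Rightarrow> 'a::linorder"
  assumes f: "strict_mono_on {a..b} f" and g: "strict_mono_on {a..b} g"
    and image_eq: "f ` {a..b} = g ` {a..b}" and i: "i \<in> {a..b}"
  shows "f i = g i"
proof -
  have sorted: "sorted_wrt (<) (map h [a..<Suc b])" if "strict_mono_on {a..b} h" for h :: "nat \<Rightarrow> 'a"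
    unfolding sorted_wrt_map
    by (rule sorted_wrt_mono_rel[OF _ sorted_wrt_upt]) (auto intro: strict_mono_onD[OF that])
  have "map f [a..<Suc b] = map g [a..<Suc b]"
    by (rule strict_sorted_equal[OF sorted[OF g] sorted[OF f]]) (simp del: upt_Suc add: atLeastLessThanSuc_atLeastAtMost image_eq)
  moreover have "map h [a..<Suc b] ! (i - a) = h i" for h :: "nat \<Rightarrow> 'a"
    using i by (auto simp del: upt_Suc)
  ultimately show ?thesis by metis
qed

lemma round_up_to_grid:
  fixes x :: real and m :: nat
  assumes "0 \<le> x" "x \<le> 1" "m > 0"
  obtains k :: nat where "0 < k" "k \<le> m" "x \<le> real k / real m" "real k / real m \<le> x + 1 / real m"
proof
  let ?k = "nat (max 1 \<lceil>real m * x\<rceil>)"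
  have k: "real ?k = max 1 (real_of_int \<lceil>real m * x\<rceil>)"
    by (simp add: of_int_max[symmetric])
  have "real m * x \<le> real m" using assms by simp
  then have "\<lceil>real m * x\<rceil> \<le> int m" by (simp add: ceiling_le_iff)
  then show "?k \<le> m" using assms(3) by simp
  have "real m * x \<le> real ?k" using k by linarith
  then show "x \<le> real ?k / real m" using assms(3) by (simp add: field_simps)
  have "0 \<le> real m * x" using assms(1) by simp
  then have "real ?k \<le> real m * x + 1" using k by linarith
  then show "real ?k / real m \<le> x + 1 / real m" using assms(3) by (simp add: field_simps)
qed simp

definition grid_cover :: "nat \<Rightarrow> (nat \<Rightarrow> real) set" where
  "grid_cover m = {\<epsilon>. (\<forall>i\<in>{1..m}. \<exists>k::nat. 0 < k \<and> k \<le> m \<and> \<epsilon> i = real k / real m)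
     \<and> (\<forall>i. i \<notin> {1..m} \<longrightarrow> \<epsilon> i = 0) \<and> (\<Sum>i=1..m. \<epsilon> i) \<le> 2}"

definition scaled_partial_sum :: "nat \<Rightarrow> (nat \<Rightarrow> real) \<Rightarrow> nat \<Rightarrow> real" where
  "scaled_partial_sum m \<epsilon> j = (\<Sum>i=1..j. real m * \<epsilon> i)"

lemma grid_cover_entry_bounds:
  assumes "\<epsilon> \<in> grid_cover m" "i \<in> {1..m}"
  shows "0 < \<epsilon> i" "\<epsilon> i \<le> 1"
proof -
  obtain k :: nat where "0 < k" "k \<le> m" "\<epsilon> i = real k / real m"
    using assms unfolding grid_cover_def by blast
  then show "0 < \<epsilon> i" "\<epsilon> i \<le> 1" using assms(2) by (simp_all add: divide_le_eq_1)
qed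

lemma grid_cover_zero_outside: "\<epsilon> \<in> grid_cover m \<Longrightarrow> i \<notin> {1..m} \<Longrightarrow> \<epsilon> i = 0"
  by (simp add: grid_cover_def)

lemma grid_cover_sum_le: "\<epsilon> \<in> grid_cover m \<Longrightarrow> (\<Sum>i=1..m. \<epsilon> i) \<le> 2"
  by (simp add: grid_cover_def)

lemma grid_cover_scaled_entry:
  assumes "\<epsilon> \<in> grid_cover m" "i \<in> {1..m}"
  shows "\<exists>k::nat. 0 < k \<and> real m * \<epsilon> i = real k"
proof -
  obtain k :: nat where "0 < k" "\<epsilon> i = real k / real m"
    using assms unfolding grid_cover_def by blast
  moreover have "m > 0" using assms(2) by simp
  ultimately show ?thesis by auto
qed

lemma strict_mono_on_scaled_partial_sum:
  assumes "\<epsilon> \<in> grid_cover m"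
  shows "strict_mono_on {1..m} (scaled_partial_sum m \<epsilon>)"
proof (rule strict_mono_onI)
  fix i j assume "i \<in> {1..m}" "j \<in> {1..m}" "i < j"
  then show "scaled_partial_sum m \<epsilon> i < scaled_partial_sum m \<epsilon> j"
    unfolding scaled_partial_sum_def
    by (intro sum_strict_mono2[where b = j])
       (auto intro!: mult_pos_pos less_imp_le grid_cover_entry_bounds[OF assms])
qed

lemma scaled_partial_sum_in_range:
  assumes \<epsilon>: "\<epsilon> \<in> grid_cover m" and j: "j \<in> {1..m}"
  shows "scaled_partial_sum m \<epsilon> j \<in> real ` {1..2*m}"
proof -
  have "\<forall>i\<in>{1..m}. \<exists>k::nat. 0 < k \<and> real m * \<epsilon> i = real k"
    using grid_cover_scaled_entry[OF \<epsilon>] by blast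
  from bchoice[OF this] obtain k :: "nat \<Rightarrow> nat"
    where "\<forall>i\<in>{1..m}. 0 < k i \<and> real m * \<epsilon> i = real (k i)"
    by blast
  then have k: "0 < k i" "real m * \<epsilon> i = real (k i)" if "i \<in> {1..m}" for i
    using that by auto
  have sum_eq: "scaled_partial_sum m \<epsilon> j = real (\<Sum>i=1..j. k i)"
    unfolding scaled_partial_sum_def of_nat_sum using j by (intro sum.cong) (auto simp: k)
  have "1 \<le> k j" using k j by (simp add: Suc_le_eq)
  also have "k j \<le> (\<Sum>i=1..j. k i)" using j by (intro member_le_sum) auto
  finally have lower: "1 \<le> (\<Sum>i=1..j. k i)" .
  have "scaled_partial_sum m \<epsilon> j \<le> (\<Sum>i=1..m. real m * \<epsilon> i)"
    unfolding scaled_partial_sum_def using j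
    by (intro sum_mono2) (auto simp: k)
  also have "\<dots> = real m * (\<Sum>i=1..m. \<epsilon> i)" by (simp add: sum_distrib_left)
  also have "\<dots> \<le> real m * 2" using grid_cover_sum_le[OF \<epsilon>] by (intro mult_left_mono) auto
  finally have upper: "(\<Sum>i=1..j. k i) \<le> 2 * m" unfolding sum_eq by linarith
  show ?thesis unfolding sum_eq by (rule imageI) (use lower upper in simp)
qed

lemma inj_on_scaled_partial_sum_image:
  "inj_on (\<lambda>\<epsilon>. scaled_partial_sum m \<epsilon> ` {1..m}) (grid_cover m)"
proof (rule inj_onI)
  fix \<epsilon> \<epsilon>' assume \<epsilon>: "\<epsilon> \<in> grid_cover m" and \<epsilon>': "\<epsilon>' \<in> grid_cover m"
    and image_eq: "scaled_partial_sum m \<epsilon> ` {1..m} = scaled_partial_sum m \<epsilon>' ` {1..m}"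
  have same_sums: "scaled_partial_sum m \<epsilon> j = scaled_partial_sum m \<epsilon>' j" if "j \<le> m" for j
  proof (cases "j = 0")
    case True then show ?thesis by (simp add: scaled_partial_sum_def)
  next
    case False then show ?thesis
      using strict_mono_on_eq_if_image_eq[OF strict_mono_on_scaled_partial_sum[OF \<epsilon>]
          strict_mono_on_scaled_partial_sum[OF \<epsilon>'] image_eq] that by simp
  qed
  show "\<epsilon> = \<epsilon>'"
  proof
    fix i
    show "\<epsilon> i = \<epsilon>' i"
    proof (cases "i \<in> {1..m}")
      case True
      then obtain j where j: "i = Suc j" "Suc j \<le> m" by (cases i) auto
      have "scaled_partial_sum m e (Suc j) = scaled_partial_sum m e j + real m * e (Suc j)"
        for e by (simp add: scaled_partial_sum_def)
      then have "real m * \<epsilon> i = real m * \<epsilon>' i" using same_sums[of j] same_sums[of "Suc j"] j by simp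
      then show ?thesis using j by simp
    next
      case False then show ?thesis using \<epsilon> \<epsilon>' by (simp add: grid_cover_zero_outside)
    qed
  qed
qed

lemma scaled_partial_sum_images_subset:
  "(\<lambda>\<epsilon>. scaled_partial_sum m \<epsilon> ` {1..m}) ` grid_cover m \<subseteq> Pow (real ` {1..2*m})"
  using scaled_partial_sum_in_range by blast

lemma finite_grid_cover: "finite (grid_cover m)"
  using inj_on_finite[OF inj_on_scaled_partial_sum_image scaled_partial_sum_images_subset] by simp

lemma card_grid_cover_le: "card (grid_cover m) \<le> 2 ^ (2 * m)"
proof -
  have "card (grid_cover m) \<le> card (Pow (real ` {1..2*m}))"
    using card_inj_on_le[OF inj_on_scaled_partial_sum_image scaled_partial_sum_images_subset] by simp
  also have "\<dots> = 2 ^ (2 * m)" by (simp add: card_Pow card_image)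
  finally show ?thesis .
qed

lemma card_grid_cover_le_powr: "real (card (grid_cover m)) \<le> 2 powr (5 * real m / 2)"
proof -
  have "real (card (grid_cover m)) \<le> 2 ^ (2 * m)"
    using card_grid_cover_le by (metis of_nat_le_iff of_nat_numeral of_nat_power)
  also have "(2::real) ^ (2 * m) = 2 powr real (2 * m)" by (rule powr_realpow[symmetric]) simp
  also have "\<dots> \<le> 2 powr (5 * real m / 2)" by (intro powr_mono) auto
  finally show ?thesis .
qed

lemma card_grid_cover_superlevel_le:
  assumes \<epsilon>: "\<epsilon> \<in> grid_cover m" and "t > 0"
  shows "real (card {i\<in>{1..m}. t \<le> \<epsilon> i}) \<le> 2 / t"
  using card_superlevel_le[of "{1..m}" \<epsilon> 2 t] grid_cover_entry_bounds(1)[OF \<epsilon>]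
    grid_cover_sum_le[OF \<epsilon>] assms(2)
  by (simp add: less_imp_le)

lemma grid_cover_dominates:
  assumes \<alpha>: "\<forall>i\<in>{1..m}. 0 \<le> \<alpha> i \<and> \<alpha> i \<le> 1" and sum_\<alpha>: "(\<Sum>i=1..m. \<alpha> i) = 1"
  shows "\<exists>\<epsilon>\<in>grid_cover m. \<forall>i\<in>{1..m}. \<alpha> i \<le> \<epsilon> i"
proof -
  have m: "m > 0" using sum_\<alpha> by (cases m) auto
  have "\<forall>i\<in>{1..m}. \<exists>k::nat. 0 < k \<and> k \<le> m \<and>
      \<alpha> i \<le> real k / real m \<and> real k / real m \<le> \<alpha> i + 1 / real m"
    using \<alpha> by (auto elim!: round_up_to_grid[OF _ _ m])
  from bchoice[OF this] obtain k :: "nat \<Rightarrow> nat" where "\<forall>i\<in>{1..m}. 0 < k i \<and> k i \<le> m \<and>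
      \<alpha> i \<le> real (k i) / real m \<and> real (k i) / real m \<le> \<alpha> i + 1 / real m"
    by blast
  then have k: "0 < k i" "k i \<le> m" "\<alpha> i \<le> real (k i) / real m"
      "real (k i) / real m \<le> \<alpha> i + 1 / real m" if "i \<in> {1..m}" for i
    using that by auto
  define \<epsilon> where "\<epsilon> i = (if i \<in> {1..m} then real (k i) / real m else 0)" for i
  have "(\<Sum>i=1..m. \<epsilon> i) \<le> (\<Sum>i=1..m. \<alpha> i + 1 / real m)"
    by (rule sum_mono) (simp add: \<epsilon>_def k)
  also have "\<dots> = 2" using sum_\<alpha> m by (simp add: sum.distrib)
  finally have "\<epsilon> \<in> grid_cover m"
    unfolding grid_cover_def using k by (auto simp: \<epsilon>_def)
  moreover have "\<forall>i\<in>{1..m}. \<alpha> i \<le> \<epsilon> i" by (simp add: \<epsilon>_def k)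
  ultimately show ?thesis by blast
qed

theorem lemma2p2:
  fixes m :: nat
  shows "\<exists>\<Gamma> :: (nat \<Rightarrow> real) set.
     (\<forall>\<epsilon>\<in>\<Gamma>. (\<forall>i\<in>{1..m}. 0 < \<epsilon> i \<and> \<epsilon> i \<le> 1) \<and> (\<forall>i. i \<notin> {1..m} \<longrightarrow> \<epsilon> i = 0)) \<and>
     finite \<Gamma> \<and> real (card \<Gamma>) \<le> 2 powr (5 * real m / 2) \<and>
     (\<forall>\<epsilon>\<in>\<Gamma>. (\<forall>i\<in>{1..m}. \<exists>k::nat. k > 0 \<and> real m * \<epsilon> i = real k) \<and>
                 (\<Sum>i=1..m. \<epsilon> i) \<le> 3 \<and>
                 (\<forall>t::real. t > 0 \<longrightarrow> real (card {i\<in>{1..m}. \<epsilon> i \<ge> t}) \<le> 2 / t)) \<and>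
     (\<forall>\<alpha> :: nat \<Rightarrow> real. (\<forall>i\<in>{1..m}. 0 \<le> \<alpha> i \<and> \<alpha> i \<le> 1) \<and> (\<Sum>i=1..m. \<alpha> i) = 1 \<longrightarrow>
        (\<exists>\<epsilon>\<in>\<Gamma>. \<forall>i\<in>{1..m}. \<alpha> i \<le> \<epsilon> i))"
proof (intro exI[of _ "grid_cover m"] conjI ballI allI impI)
  show "finite (grid_cover m)" by (rule finite_grid_cover)
  show "real (card (grid_cover m)) \<le> 2 powr (5 * real m / 2)" by (rule card_grid_cover_le_powr)
qed (blast intro: grid_cover_entry_bounds grid_cover_zero_outside grid_cover_scaled_entry
      card_grid_cover_superlevel_le grid_cover_dominates | force dest: grid_cover_sum_le)+

end
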